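(* Let $G$ be a finite group and $n$ a positive divisor of $|G|$. Then $G$ has at least $d(n)$ cyclic subgroups whose order divides $n$. Moreover the following are equivalent: (1) for every positive divisor $m$ of $n$, $G$ has exactly $m$ elements $x$ with $x^m=1$; (2) $G$ has exactly $d(n)$ cyclic subgroups whose order divides $n$; (3) the subgroup of $G$ generated by all cyclic subgroups of $G$ of order dividing $n$ is cyclic of order $n$.
   Context: $d(n)$ denotes the number of positive divisors of $n$. *)

theory Defs
  imports "HOL-Algebra.Algebra"
begin

definition num_divisors :: "nat \<Rightarrow> nat" where
  "num_divisors n = card {m. 0 < m \<and> m dvd n}"

definition cyclic_subgroup :: "('a, 'b) monoid_scheme \<Rightarrow> 'a set \<Rightarrow> bool" where
  "cyclic_subgroup G H \<longleftrightarrow> (\<exists>g \<in> carrier G. H = generate G {g})"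

end

theory Submission
  imports Defs "HOL-Number_Theory.Totient"
begin

text \<open>
  Write N(m) for the number of solutions of x^m = 1 in G. Counting generators,
  N(m) is the sum of \<phi>(|H|) over the cyclic subgroups H with |H| dividing m. Evaluating this at
  m = gcd(u - 1, n) and summing over the totatives u of n, each cyclic subgroup H with |H| dividing n
  is met by exactly \<phi>(n)/\<phi>(|H|) totatives (those with u \<equiv> 1 mod |H|), so the sum is
  c(n) \<phi>(n), where c(n) is the number of such subgroups; the same computation in a cyclic group of
  order n is Menon's identity, summing gcd(u - 1, n) to d(n) \<phi>(n). Frobenius' theorem (m dividing |G|
  implies m dividing N(m)) bounds the summands termwise, N(gcd(u - 1, n)) \<ge> gcd(u - 1, n), which
  gives c(n) \<ge> d(n), with equality iff all these bounds are sharp. Every divisor m of n is some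
  gcd(u - 1, n), except when n is even and m is odd; then an involution shows N(m) < N(2m) = 2m, and
  Frobenius forces N(m) = m. Finally, N(m) = m for all m dividing n yields an element of order n whose
  cyclic subgroup contains all solutions of x^n = 1, and conversely x^m = 1 has exactly m solutions
  in a cyclic group of order n.

  Frobenius' theorem is proved by induction on |G| and downwards on n. For n = p^e r with p a prime
  dividing |G|/n, the solutions of x^(a r) = 1 with a coprime to r are the commuting products of
  solutions of x^a = 1 and x^r = 1; grouping them along conjugacy classes and applying the induction
  hypothesis in the centralizers of non-central elements yields divisibility by r and by p^e.
\<close>

section \<open>Totatives and Menon's identity\<close>

lemma coprime_if_no_common_prime_factor:
  fixes a b :: nat
  assumes "\<And>p. Factorial_Ring.prime p \<Longrightarrow> p dvd a \<Longrightarrow> p dvd b \<Longrightarrow> False"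
  shows "coprime a b"
proof (rule ccontr)
  assume "\<not> coprime a b"
  then obtain p where "Factorial_Ring.prime p" "p dvd gcd a b"
    using prime_factor_nat by (metis coprime_iff_gcd_eq_1)
  with assms show False by auto
qed

lemma prime_dvd_prod_primes_iff:
  fixes A :: "nat set"
  assumes "finite A" "\<forall>a\<in>A. Factorial_Ring.prime a" "Factorial_Ring.prime q"
  shows "q dvd \<Prod>A \<longleftrightarrow> q \<in> A"
  using assms prime_dvd_prod_iff[of A q id] primes_dvd_imp_eq[of q] by (auto intro: dvd_prodI)

lemma dvd_prime_power_Suc_iff:
  fixes p k :: nat
  assumes "Factorial_Ring.prime p"
  shows "k dvd p ^ Suc e \<longleftrightarrow> k dvd p ^ e \<or> k = p ^ Suc e"
proof
  assume "k dvd p ^ Suc e"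
  then obtain i where "i \<le> Suc e" "k = p ^ i" using divides_primepow_nat[OF assms] by blast
  thus "k dvd p ^ e \<or> k = p ^ Suc e" by (cases "i = Suc e") (auto simp: le_imp_power_dvd)
next
  assume "k dvd p ^ e \<or> k = p ^ Suc e"
  thus "k dvd p ^ Suc e" using dvd_trans[of k "p ^ e" "p ^ Suc e"] by auto
qed

lemma exists_prime_split_dvd:
  fixes n N :: nat
  assumes "n dvd N" "n \<noteq> N" "N > 0"
  shows "\<exists>p e r. Factorial_Ring.prime p \<and> n = p ^ e * r \<and> coprime p r \<and> p * n dvd N"
proof -
  have "n > 0" using assms by (intro gr0I) auto
  obtain q where q: "N = n * q" using assms(1) by blast
  hence "q \<noteq> 1" using assms(2) by auto
  then obtain p where p: "Factorial_Ring.prime p" "p dvd q" using prime_factor_nat by blast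
  obtain r where r: "n = p ^ multiplicity p n * r" "\<not> p dvd r"
    using multiplicity_decompose'[of n p] \<open>n > 0\<close> prime_gt_1_nat[OF p(1)] by auto
  moreover have "coprime p r" using prime_imp_coprime[OF p(1) r(2)] .
  moreover have "p * n dvd N" using q p(2) by (simp add: mult.commute mult_dvd_mono)
  ultimately show ?thesis using p(1) by blast
qed

lemma mod_in_totatives:
  fixes x n :: nat
  assumes "n > 1" "coprime x n"
  shows "x mod n \<in> totatives n"
  using assms power_in_totatives[of n x 1] by (simp add: coprime_commute)

lemma exists_coprime_cong:
  fixes n k v :: nat
  assumes "n > 0" "k dvd n" "coprime v k"
  shows "\<exists>w. coprime w n \<and> [w = v] (mod k)"
proof -
  define A where "A = {p. Factorial_Ring.prime p \<and> p dvd n \<and> \<not> p dvd v}"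
  have "A \<subseteq> {..n}" using \<open>n > 0\<close> by (auto simp: A_def dest: dvd_imp_le)
  hence finA: "finite A" by (rule finite_subset) simp
  have primeA: "\<forall>a\<in>A. Factorial_Ring.prime a" by (simp add: A_def)
  define w where "w = v + k * \<Prod>A"
  \<comment> \<open>every prime factor of n divides exactly one of the two summands of w\<close>
  have "coprime w n"
  proof (rule coprime_if_no_common_prime_factor)
    fix p assume p: "Factorial_Ring.prime p" "p dvd w" "p dvd n"
    show False
    proof (cases "p dvd v")
      case True
      hence "p dvd k * \<Prod>A" using p(2) by (simp add: w_def dvd_add_right_iff)
      moreover have "\<not> p dvd k" using True assms(3) p(1) coprime_common_divisor not_prime_unit by blast
      ultimately have "p \<in> A" using p(1) prime_dvd_prod_primes_iff[OF finA primeA p(1)]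
        by (simp add: prime_dvd_mult_iff)
      with True show False by (simp add: A_def)
    next
      case False
      hence "p dvd \<Prod>A" using p prime_dvd_prod_primes_iff[OF finA primeA p(1)] by (simp add: A_def)
      hence "p dvd v" using p(2) by (simp add: w_def dvd_add_left_iff)
      with False show False by simp
    qed
  qed
  moreover have "[w = v] (mod k)" by (simp add: w_def cong_def)
  ultimately show ?thesis by blast
qed

lemma card_totatives_cong_le_of_mult:
  fixes n k a b c :: nat
  assumes "n > 1" "k dvd n" "coprime c n" "[a * c = b] (mod k)"
  shows "card {u \<in> totatives n. [u = a] (mod k)} \<le> card {u \<in> totatives n. [u = b] (mod k)}"
proof (rule card_inj_on_le)
  show "inj_on (\<lambda>u. u * c mod n) {u \<in> totatives n. [u = a] (mod k)}"
  proof (rule inj_onI)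
    fix u u' assume u: "u \<in> {u \<in> totatives n. [u = a] (mod k)}" "u' \<in> {u \<in> totatives n. [u = a] (mod k)}"
      and "u * c mod n = u' * c mod n"
    hence "[u = u'] (mod n)" using cong_mult_rcancel_nat[OF assms(3)] by (simp add: cong_def)
    moreover have "u < n" "u' < n" using u totatives_less[OF _ assms(1)] by auto
    ultimately show "u = u'" using cong_less_imp_eq_nat by simp
  qed
  show "(\<lambda>u. u * c mod n) ` {u \<in> totatives n. [u = a] (mod k)} \<subseteq> {u \<in> totatives n. [u = b] (mod k)}"
  proof (rule image_subsetI)
    fix u assume "u \<in> {u \<in> totatives n. [u = a] (mod k)}"
    hence u: "u \<in> totatives n" "[u = a] (mod k)" by simp_all
    have "coprime (u * c) n" using u(1) assms(3) by (simp add: in_totatives_iff)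
    hence "u * c mod n \<in> totatives n" by (rule mod_in_totatives[OF assms(1)])
    moreover have "[u * c mod n = b] (mod k)"
    proof -
      have "[u * c mod n = u * c] (mod k)"
        using cong_dvd_modulus_nat[of "u * c mod n" "u * c" n k] assms(2) by simp
      also have "[u * c = a * c] (mod k)" using u(2) by (simp add: cong_mult)
      finally show ?thesis using assms(4) by (rule cong_trans)
    qed
    ultimately show "u * c mod n \<in> {u \<in> totatives n. [u = b] (mod k)}" by simp
  qed
qed simp

lemma card_totatives_cong_eq:
  fixes n k v :: nat
  assumes "n > 1" "k dvd n" "coprime v k"
  shows "card {u \<in> totatives n. [u = v] (mod k)} = card {u \<in> totatives n. [u = 1] (mod k)}"
proof -
  obtain w where w: "coprime w n" "[w = v] (mod k)"
    using exists_coprime_cong[of n k v] assms by auto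
  obtain x where x: "[w * x = 1] (mod n)" using cong_solve_coprime_nat[OF w(1)] by auto
  have "[x * w = Suc 0] (mod n)" using x by (simp add: mult.commute)
  hence "coprime x n" by (auto simp: coprime_iff_invertible_nat)
  have "[1 * w = v] (mod k)" using w(2) by simp
  moreover have "[v * x = w * x] (mod k)" using w(2) by (simp add: cong_mult cong_sym)
  hence "[v * x = 1] (mod k)" using cong_dvd_modulus_nat[OF x \<open>k dvd n\<close>] by (rule cong_trans)
  ultimately show ?thesis
    using card_totatives_cong_le_of_mult[OF assms(1,2) w(1)]
      card_totatives_cong_le_of_mult[OF assms(1,2) \<open>coprime x n\<close>]
    by (meson le_antisym)
qed

lemma card_totatives_cong_one:
  fixes n k :: nat
  assumes "n > 0" "k dvd n"
  shows "card {u \<in> totatives n. [u = 1] (mod k)} * totient k = totient n"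
proof (cases "k = 1")
  case True
  thus ?thesis by (simp add: totient_def)
next
  case False
  moreover have "k \<noteq> 0" using assms by auto
  ultimately have "k > 1" by simp
  hence "n > 1" using dvd_imp_le[OF assms(2,1)] by linarith
  define A where "A v = {u \<in> totatives n. [u = v] (mod k)}" for v
  have partition: "totatives n = (\<Union>v\<in>totatives k. A v)"
  proof (intro equalityI subsetI)
    fix u assume u: "u \<in> totatives n"
    hence "coprime u k" using coprime_divisors[OF dvd_refl assms(2)] by (simp add: in_totatives_iff)
    hence "u mod k \<in> totatives k" by (rule mod_in_totatives[OF \<open>k > 1\<close>])
    moreover have "u \<in> A (u mod k)" using u by (simp add: A_def cong_sym)
    ultimately show "u \<in> (\<Union>v\<in>totatives k. A v)" by blast
  qed (auto simp: A_def)
  have disjoint: "A v \<inter> A v' = {}" if "v \<in> totatives k" "v' \<in> totatives k" "v \<noteq> v'" for v v'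
  proof (rule ccontr)
    assume "A v \<inter> A v' \<noteq> {}"
    then obtain u where "[u = v] (mod k)" "[u = v'] (mod k)" by (auto simp: A_def)
    hence "[v = v'] (mod k)" by (blast intro: cong_trans cong_sym)
    moreover have "v < k" "v' < k" using that totatives_less[OF _ \<open>k > 1\<close>] by auto
    ultimately show False using cong_less_imp_eq_nat \<open>v \<noteq> v'\<close> by simp
  qed
  have "totient n = (\<Sum>v\<in>totatives k. card (A v))"
    unfolding totient_def partition using disjoint by (intro card_UN_disjoint) (auto simp: A_def)
  also have "\<dots> = (\<Sum>v\<in>totatives k. card (A 1))"
    unfolding A_def
    by (rule sum.cong[OF refl], rule card_totatives_cong_eq[OF \<open>n > 1\<close> assms(2)])
      (simp add: in_totatives_iff)
  finally show ?thesis by (simp add: A_def totient_def mult.commute)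
qed

lemma card_totatives_dvd_pred:
  fixes n d :: nat
  assumes "n > 0" "d dvd n"
  shows "card {u \<in> totatives n. d dvd u - 1} * totient d = totient n"
proof -
  have "{u \<in> totatives n. d dvd u - 1} = {u \<in> totatives n. [u = 1] (mod d)}"
    by (auto simp: in_totatives_iff cong_altdef_nat)
  thus ?thesis using card_totatives_cong_one[OF assms] by simp
qed

lemma sum_totatives_sum_totient_dvd_pred:
  fixes n :: nat and \<kappa> :: "'b \<Rightarrow> nat"
  assumes "n > 0" "finite I" "\<And>i. i \<in> I \<Longrightarrow> \<kappa> i dvd n"
  shows "(\<Sum>u\<in>totatives n. \<Sum>i\<in>{i \<in> I. \<kappa> i dvd u - 1}. totient (\<kappa> i)) = card I * totient n"
proof -
  have "(\<Sum>u\<in>totatives n. \<Sum>i\<in>{i \<in> I. \<kappa> i dvd u - 1}. totient (\<kappa> i))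
      = (\<Sum>i\<in>I. \<Sum>u\<in>totatives n. if \<kappa> i dvd u - 1 then totient (\<kappa> i) else 0)"
    using \<open>finite I\<close> by (simp add: sum.inter_filter sum.swap[of _ "totatives n"])
  also have "\<dots> = (\<Sum>i\<in>I. card {u \<in> totatives n. \<kappa> i dvd u - 1} * totient (\<kappa> i))"
    by (simp add: sum.If_cases Int_def conj_commute)
  also have "\<dots> = (\<Sum>i\<in>I. totient n)"
    using card_totatives_dvd_pred[OF \<open>n > 0\<close> assms(3)] by simp
  finally show ?thesis by simp
qed

lemma gcd_eq_sum_totient:
  fixes a n :: nat
  shows "gcd a n = (\<Sum>d\<in>{d. d dvd n \<and> d dvd a}. totient d)"
  using totient_divisor_sum[of "gcd a n"] by (simp add: conj_commute)

lemma sum_totatives_gcd_pred: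
  fixes n :: nat
  assumes "n > 0"
  shows "(\<Sum>u\<in>totatives n. gcd (u - 1) n) = num_divisors n * totient n"
proof -
  have "num_divisors n = card {d. d dvd n}"
    unfolding num_divisors_def using assms by (metis dvd_0_left_iff gr0I)
  moreover have "{d. d dvd n \<and> d dvd u - 1} = {d \<in> {d. d dvd n}. d dvd u - 1}" for u
    by blast
  ultimately show ?thesis
    using sum_totatives_sum_totient_dvd_pred[OF assms, of "{d. d dvd n}" id] assms
    by (simp add: gcd_eq_sum_totient[of _ n])
qed

lemma exists_cong_on_disjoint_primes:
  fixes A B :: "nat set" and a b :: nat
  assumes "finite A" "finite B" "\<forall>p\<in>A. Factorial_Ring.prime p" "\<forall>p\<in>B. Factorial_Ring.prime p"
    and "A \<inter> B = {}"
  shows "\<exists>w. (\<forall>p\<in>A. [w = a] (mod p)) \<and> (\<forall>p\<in>B. [w = b] (mod p))"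
proof -
  have "coprime (\<Prod>A) (\<Prod>B)"
  proof (rule coprime_if_no_common_prime_factor)
    fix p assume "Factorial_Ring.prime p" "p dvd \<Prod>A" "p dvd \<Prod>B"
    hence "p \<in> A" "p \<in> B"
      using prime_dvd_prod_primes_iff[OF assms(1,3)] prime_dvd_prod_primes_iff[OF assms(2,4)] by simp_all
    thus False using assms(5) by blast
  qed
  then obtain w where w: "[w = a] (mod \<Prod>A)" "[w = b] (mod \<Prod>B)"
    using binary_chinese_remainder_nat by blast
  have "[w = a] (mod p)" if "p \<in> A" for p
    using cong_dvd_modulus_nat[OF w(1) dvd_prodI[OF assms(1) that, of "\<lambda>x. x"]] by simp
  moreover have "[w = b] (mod p)" if "p \<in> B" for p
    using cong_dvd_modulus_nat[OF w(2) dvd_prodI[OF assms(2) that, of "\<lambda>x. x"]] by simp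
  ultimately show ?thesis by blast
qed

lemma exists_coprime_affine:
  fixes n m :: nat
  assumes "n > 0" "m dvd n" "odd n \<or> even m"
  shows "\<exists>w. coprime w (n div m) \<and> coprime (1 + m * w) n"
proof -
  define P where "P = {p. Factorial_Ring.prime p \<and> p dvd n}"
  define A where "A = {p \<in> P. \<not> p dvd m \<and> p dvd m + 1}"
  have "P \<subseteq> {..n}" using \<open>n > 0\<close> by (auto simp: P_def dest: dvd_imp_le)
  hence "finite P" by (rule finite_subset) simp
  hence "finite A" "finite (P - A)" by (simp_all add: A_def)
  moreover have "\<forall>p\<in>A. Factorial_Ring.prime p" "\<forall>p\<in>P - A. Factorial_Ring.prime p"
    by (simp_all add: A_def P_def)
  ultimately obtain w where w: "\<forall>p\<in>A. [w = 2] (mod p)" "\<forall>p\<in>P - A. [w = 1] (mod p)"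
    using exists_cong_on_disjoint_primes[of A "P - A"] by blast
  \<comment> \<open>at a prime of A (odd, by the parity assumption) w \<equiv> 2 and 1 + m w \<equiv> -1; elsewhere w \<equiv> 1\<close>
  have good: "\<not> p dvd w \<and> \<not> p dvd 1 + m * w" if "p \<in> P" for p
  proof (cases "p \<in> A")
    case True
    hence wp: "[w = 2] (mod p)" using w(1) by blast
    have "p \<noteq> 2" using True assms(3) by (auto simp: A_def P_def elim: dvd_trans[rotated])
    hence "\<not> p dvd 2" using that primes_dvd_imp_eq[OF _ two_is_prime_nat] by (auto simp: P_def)
    moreover have "\<not> p dvd 1 + m * 2"
    proof
      assume "p dvd 1 + m * 2"
      moreover have "p dvd 2 * (m + 1)" using True by (simp add: A_def del: mult_Suc_right)
      hence "p dvd (1 + m * 2) + 1" by (simp add: algebra_simps)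
      ultimately have "p dvd 1" using dvd_add_right_iff by blast
      thus False using that by (auto simp: P_def)
    qed
    moreover have "[1 + m * w = 1 + m * 2] (mod p)" by (intro cong_add cong_mult cong_refl wp)
    ultimately show ?thesis using wp by (simp add: cong_dvd_iff)
  next
    case False
    hence wp: "[w = 1] (mod p)" using w(2) that by blast
    have "\<not> p dvd 1" using that by (auto simp: P_def)
    moreover have "\<not> p dvd 1 + m"
    proof
      assume "p dvd 1 + m"
      moreover from this have "\<not> p dvd m" using \<open>\<not> p dvd 1\<close> dvd_add_left_iff by blast
      ultimately show False using False that by (simp add: A_def)
    qed
    moreover have "[1 + m * w = 1 + m * 1] (mod p)" by (intro cong_add cong_mult cong_refl wp)
    ultimately show ?thesis using wp by (simp add: cong_dvd_iff)
  qed
  have "n div m dvd n" using assms(2) by (metis dvd_mult_div_cancel dvd_triv_right)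
  hence "coprime w (n div m)"
    by (intro coprime_if_no_common_prime_factor) (use good dvd_trans in \<open>auto simp: P_def\<close>)
  moreover have "coprime (1 + m * w) n"
    by (rule coprime_if_no_common_prime_factor) (use good in \<open>auto simp: P_def\<close>)
  ultimately show ?thesis by blast
qed

lemma exists_totative_gcd_pred_eq:
  fixes n m :: nat
  assumes "n > 0" "m dvd n" "odd n \<or> even m"
  shows "\<exists>u\<in>totatives n. gcd (u - 1) n = m"
proof (cases "n = 1")
  case True
  thus ?thesis using assms(2) by (intro bexI[of _ 1]) auto
next
  case False
  hence "n > 1" using assms(1) by simp
  obtain w where w: "coprime w (n div m)" "coprime (1 + m * w) n"
    using exists_coprime_affine[OF assms] by blast
  define u where "u = (1 + m * w) mod n"
  have "u \<in> totatives n" unfolding u_def by (rule mod_in_totatives[OF \<open>n > 1\<close> w(2)])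
  hence "[u - 1 = (1 + m * w) - 1] (mod n)"
    by (intro cong_diff_nat) (auto simp: u_def in_totatives_iff)
  hence "gcd (u - 1) n = gcd (m * w) n" using cong_gcd_eq by fastforce
  also have "\<dots> = m * gcd w (n div m)"
    using assms(2) by (metis dvd_mult_div_cancel gcd_mult_distrib_nat)
  also have "\<dots> = m" using w(1) by simp
  finally show ?thesis using \<open>u \<in> totatives n\<close> by blast
qed

section \<open>Roots of unity, centralizers and conjugation\<close>

definition unity_roots :: "('a, 'b) monoid_scheme \<Rightarrow> nat \<Rightarrow> 'a set" where
  "unity_roots G m = {x \<in> carrier G. x [^]\<^bsub>G\<^esub> m = \<one>\<^bsub>G\<^esub>}"

locale finite_group = group + assumes finite_carrier [simp]: "finite (carrier G)"

context group
begin

lemma unity_roots_subgroup: "unity_roots (G\<lparr>carrier := H\<rparr>) m = {x \<in> H. x [^] m = \<one>}"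
  by (simp add: unity_roots_def nat_pow_def)

lemma mem_unity_roots_iff: "x \<in> unity_roots G m \<longleftrightarrow> x \<in> carrier G \<and> ord x dvd m"
  using pow_eq_id by (auto simp: unity_roots_def)

lemma unity_roots_mono: "a dvd b \<Longrightarrow> unity_roots G a \<subseteq> unity_roots G b"
  by (auto simp: mem_unity_roots_iff intro: dvd_trans)

lemma pow_card_subgroup_eq_one:
  assumes "subgroup H G" "finite H" "x \<in> H"
  shows "x [^] card H = \<one>"
proof -
  interpret H: group "G\<lparr>carrier := H\<rparr>" using subgroup.subgroup_is_group[OF assms(1) is_group] .
  have "x [^]\<^bsub>G\<lparr>carrier := H\<rparr>\<^esub> order (G\<lparr>carrier := H\<rparr>) = \<one>\<^bsub>G\<lparr>carrier := H\<rparr>\<^esub>"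
    using H.pow_order_eq_1 assms(3) by simp
  thus ?thesis by (simp add: nat_pow_def order_def)
qed

definition centralizer :: "'a \<Rightarrow> 'a set" where
  "centralizer x = {g \<in> carrier G. g \<otimes> x = x \<otimes> g}"

definition center :: "'a set" where
  "center = {x \<in> carrier G. \<forall>g\<in>carrier G. g \<otimes> x = x \<otimes> g}"

abbreviation conj_action :: "'a \<Rightarrow> 'a \<Rightarrow> 'a" where
  "conj_action \<equiv> \<lambda>g. \<lambda>x\<in>carrier G. g \<otimes> x \<otimes> inv g"

lemma stabilizer_conj_action:
  assumes "x \<in> carrier G"
  shows "stabilizer G conj_action x = centralizer x"
proof -
  have "g \<otimes> x \<otimes> inv g = x \<longleftrightarrow> g \<otimes> x = x \<otimes> g" if "g \<in> carrier G" for g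
  proof
    assume "g \<otimes> x \<otimes> inv g = x"
    hence "g \<otimes> x \<otimes> inv g \<otimes> g = x \<otimes> g" by simp
    thus "g \<otimes> x = x \<otimes> g" using that assms by (simp add: m_assoc)
  next
    assume "g \<otimes> x = x \<otimes> g"
    thus "g \<otimes> x \<otimes> inv g = x" using that assms by (simp add: m_assoc)
  qed
  thus ?thesis using assms by (auto simp: stabilizer_def centralizer_def)
qed

lemma subgroup_centralizer: "x \<in> carrier G \<Longrightarrow> subgroup (centralizer x) G"
  using group_action.stabilizer_subgroup[OF action_by_conjugation] by (simp add: stabilizer_conj_action)

lemma card_orbit_mult_card_centralizer:
  "x \<in> carrier G \<Longrightarrow> card (orbit G conj_action x) * card (centralizer x) = order G"
  using group_action.orbit_stabilizer_theorem[OF action_by_conjugation]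
  by (simp add: stabilizer_conj_action)

lemma centralizer_eq_carrier_iff:
  assumes "y \<in> carrier G"
  shows "centralizer y = carrier G \<longleftrightarrow> y \<in> center"
proof -
  have "centralizer y = carrier G \<longleftrightarrow> (\<forall>g\<in>carrier G. g \<otimes> y = y \<otimes> g)"
    unfolding centralizer_def by blast
  thus ?thesis using assms by (simp add: center_def)
qed

lemma center_eq_Inter_centralizers: "center = carrier G \<inter> (\<Inter>g\<in>carrier G. centralizer g)"
proof (intro equalityI subsetI)
  fix x assume "x \<in> center"
  hence "x \<in> carrier G" "\<forall>g\<in>carrier G. g \<otimes> x = x \<otimes> g" by (simp_all add: center_def)
  thus "x \<in> carrier G \<inter> (\<Inter>g\<in>carrier G. centralizer g)" by (simp add: centralizer_def)
next
  fix x assume "x \<in> carrier G \<inter> (\<Inter>g\<in>carrier G. centralizer g)"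
  hence "x \<in> carrier G" "\<forall>g\<in>carrier G. x \<otimes> g = g \<otimes> x" by (simp_all add: centralizer_def)
  thus "x \<in> center" by (simp add: center_def)
qed

lemma subgroup_center_unity_roots: "subgroup (center \<inter> unity_roots G a) G"
proof (rule subgroupI)
  show "center \<inter> unity_roots G a \<subseteq> carrier G" by (auto simp: center_def)
  have "\<one> \<in> center \<inter> unity_roots G a" by (simp add: center_def unity_roots_def)
  thus "center \<inter> unity_roots G a \<noteq> {}" by blast
next
  fix y assume y: "y \<in> center \<inter> unity_roots G a"
  have "inv y \<in> centralizer g" if "g \<in> carrier G" for g
    using subgroup.m_inv_closed[OF subgroup_centralizer[OF that]] y that
    by (simp add: center_eq_Inter_centralizers)
  thus "inv y \<in> center \<inter> unity_roots G a"
    using y by (simp add: center_eq_Inter_centralizers unity_roots_def nat_pow_inv)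
next
  fix y z assume y: "y \<in> center \<inter> unity_roots G a" and z: "z \<in> center \<inter> unity_roots G a"
  have yz: "y \<in> carrier G" "z \<in> carrier G" "y [^] a = \<one>" "z [^] a = \<one>"
    using y z by (simp_all add: unity_roots_def)
  hence "z \<otimes> y = y \<otimes> z" using y by (simp add: center_def)
  hence "(y \<otimes> z) [^] a = \<one>" using yz by (simp add: pow_mult_distrib)
  moreover have "y \<otimes> z \<in> centralizer g" if "g \<in> carrier G" for g
    using subgroup.m_closed[OF subgroup_centralizer[OF that]] y z that
    by (simp add: center_eq_Inter_centralizers)
  ultimately show "y \<otimes> z \<in> center \<inter> unity_roots G a"
    using yz by (simp add: center_eq_Inter_centralizers unity_roots_def)
qed

lemma group_hom_conjugation:
  assumes "g \<in> carrier G"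
  shows "group_hom G G (\<lambda>x. g \<otimes> x \<otimes> inv g)"
proof (unfold_locales, rule homI)
  fix x y assume "x \<in> carrier G" "y \<in> carrier G"
  moreover have "inv g \<otimes> (g \<otimes> (y \<otimes> inv g)) = y \<otimes> inv g"
    using assms \<open>y \<in> carrier G\<close> by (simp add: m_assoc[symmetric])
  ultimately show "g \<otimes> (x \<otimes> y) \<otimes> inv g = g \<otimes> x \<otimes> inv g \<otimes> (g \<otimes> y \<otimes> inv g)"
    using assms by (simp add: m_assoc)
qed (use assms in simp)

lemma conj_inv_conj: "g \<in> carrier G \<Longrightarrow> y \<in> carrier G \<Longrightarrow> inv g \<otimes> (g \<otimes> y \<otimes> inv g) \<otimes> inv (inv g) = y"
  by (simp add: m_assoc[symmetric], simp add: m_assoc)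

lemma conj_center: "g \<in> carrier G \<Longrightarrow> y \<in> center \<Longrightarrow> g \<otimes> y \<otimes> inv g = y"
  by (simp add: center_def m_assoc)

lemma conj_mem_center_iff:
  assumes "g \<in> carrier G" "y \<in> carrier G"
  shows "g \<otimes> y \<otimes> inv g \<in> center \<longleftrightarrow> y \<in> center"
proof
  assume "g \<otimes> y \<otimes> inv g \<in> center"
  moreover from this have "inv g \<otimes> (g \<otimes> y \<otimes> inv g) \<otimes> inv (inv g) = g \<otimes> y \<otimes> inv g"
    using assms conj_center[of "inv g" "g \<otimes> y \<otimes> inv g"] by simp
  ultimately show "y \<in> center" using conj_inv_conj[OF assms] by simp
qed (use conj_center[OF assms(1)] in simp)

lemma conj_eq_one_iff: "g \<in> carrier G \<Longrightarrow> z \<in> carrier G \<Longrightarrow> g \<otimes> z \<otimes> inv g = \<one> \<longleftrightarrow> z = \<one>"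
  using conj_inv_conj[of g z] by auto

lemma conj_mem_unity_roots_iff:
  assumes "g \<in> carrier G" "y \<in> carrier G"
  shows "g \<otimes> y \<otimes> inv g \<in> unity_roots G a \<longleftrightarrow> y \<in> unity_roots G a"
proof -
  interpret group_hom G G "\<lambda>x. g \<otimes> x \<otimes> inv g" by (rule group_hom_conjugation[OF assms(1)])
  show ?thesis
    using hom_nat_pow[of y a] conj_eq_one_iff[OF assms(1), of "y [^] a"] assms by (simp add: unity_roots_def)
qed

lemma conjugation_centralizer_unity_roots:
  assumes "g \<in> carrier G" "y \<in> carrier G"
  shows "(\<lambda>z. g \<otimes> z \<otimes> inv g) ` (centralizer y \<inter> unity_roots G r)
           \<subseteq> centralizer (g \<otimes> y \<otimes> inv g) \<inter> unity_roots G r"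
proof (rule image_subsetI)
  interpret group_hom G G "\<lambda>x. g \<otimes> x \<otimes> inv g" by (rule group_hom_conjugation[OF assms(1)])
  fix z assume "z \<in> centralizer y \<inter> unity_roots G r"
  hence z: "z \<in> carrier G" "z \<otimes> y = y \<otimes> z" "z [^] r = \<one>"
    by (auto simp: centralizer_def unity_roots_def)
  have "(g \<otimes> z \<otimes> inv g) \<otimes> (g \<otimes> y \<otimes> inv g) = (g \<otimes> y \<otimes> inv g) \<otimes> (g \<otimes> z \<otimes> inv g)"
    using hom_mult[of z y] hom_mult[of y z] z assms by simp
  moreover have "(g \<otimes> z \<otimes> inv g) [^] r = \<one>" using hom_nat_pow[of z r] z by simp
  ultimately show "g \<otimes> z \<otimes> inv g \<in> centralizer (g \<otimes> y \<otimes> inv g) \<inter> unity_roots G r"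
    using z assms by (simp add: centralizer_def unity_roots_def)
qed

lemma pow_mult_eq_of_bezout:
  fixes a b u v :: nat
  assumes "a * u = b * v + 1" "y \<in> carrier G" "y [^] a = \<one>" "z \<in> carrier G" "z [^] b = \<one>"
    and "z \<otimes> y = y \<otimes> z"
  shows "(y \<otimes> z) [^] (a * u) = z"
proof -
  have "z [^] (a * u) = (z [^] b) [^] v \<otimes> z [^] (1::nat)"
    unfolding assms(1) using assms(4) by (simp only: nat_pow_mult nat_pow_pow)
  hence "z [^] (a * u) = z" using assms(4,5) by simp
  moreover have "y [^] (a * u) = \<one>" using assms(2,3) by (simp add: nat_pow_pow[symmetric])
  ultimately show ?thesis using pow_mult_distrib[of y z "a * u"] assms(2,4,6) by simp
qed

lemma split_unity_root_of_bezout: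
  fixes a b u v :: nat
  assumes "a * u = b * v + 1" "x \<in> carrier G" "x [^] (a * b) = \<one>"
  shows "inv (x [^] (b * v)) \<in> unity_roots G a"
    and "x [^] (a * u) \<in> centralizer (inv (x [^] (b * v))) \<inter> unity_roots G b"
    and "inv (x [^] (b * v)) \<otimes> x [^] (a * u) = x"
proof -
  have pow_one: "x [^] (a * b * k) = \<one>" for k using assms(2,3) by (simp add: nat_pow_pow[symmetric])
  have "inv (x [^] (b * v)) [^] a = inv (x [^] (a * b * v))"
    using assms(2) by (simp add: nat_pow_inv nat_pow_pow ac_simps)
  thus "inv (x [^] (b * v)) \<in> unity_roots G a" using assms(2) pow_one by (simp add: unity_roots_def)
  have "(x [^] (a * u)) [^] b = x [^] (a * b * u)" using assms(2) by (simp add: nat_pow_pow ac_simps)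
  moreover have "x [^] (b * v) \<in> centralizer (x [^] (a * u))"
    using assms(2) by (simp add: centralizer_def nat_pow_comm)
  hence "inv (x [^] (b * v)) \<in> centralizer (x [^] (a * u))"
    using subgroup.m_inv_closed[OF subgroup_centralizer] assms(2) by simp
  ultimately show "x [^] (a * u) \<in> centralizer (inv (x [^] (b * v))) \<inter> unity_roots G b"
    using assms(2) pow_one by (simp add: centralizer_def unity_roots_def)
  have "x [^] (a * u) = x [^] (b * v) \<otimes> x [^] (1::nat)"
    unfolding assms(1) using assms(2) by (simp only: nat_pow_mult)
  thus "inv (x [^] (b * v)) \<otimes> x [^] (a * u) = x" using assms(2) by (simp add: m_assoc[symmetric])
qed

end

context finite_group
begin

lemma finite_group_subgroup:
  assumes "subgroup H G"
  shows "finite_group (G\<lparr>carrier := H\<rparr>)"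
proof -
  have "finite H" by (rule finite_subset[OF subgroup.subset[OF assms] finite_carrier])
  thus ?thesis using subgroup.subgroup_is_group[OF assms is_group]
    by (simp add: finite_group_def finite_group_axioms_def)
qed

lemma finite_unity_roots [simp]: "finite (unity_roots G m)"
  by (simp add: unity_roots_def)

lemma exists_pow_prime_eq_one:
  assumes "Factorial_Ring.prime p" "p dvd order G"
  shows "\<exists>x\<in>carrier G. x \<noteq> \<one> \<and> x [^] p = \<one>"
proof -
  obtain m where "order G = p ^ 1 * m" using assms(2) by auto
  then obtain H where H: "subgroup H G" "card H = p ^ 1"
    using sylow_thm[OF assms(1) is_group _ finite_carrier] by blast
  have "finite H" by (rule finite_subset[OF subgroup.subset[OF H(1)] finite_carrier])
  have "H \<noteq> {\<one>}" using H(2) prime_gt_1_nat[OF assms(1)] by auto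
  then obtain x where x: "x \<in> H" "x \<noteq> \<one>" using subgroup.one_closed[OF H(1)] by blast
  thus ?thesis
    using pow_card_subgroup_eq_one[OF H(1) \<open>finite H\<close> x(1)] H(2) subgroup.mem_carrier[OF H(1)] by auto
qed

lemma card_centralizer_unity_roots_conj:
  assumes "g \<in> carrier G" "y \<in> carrier G"
  shows "card (centralizer (g \<otimes> y \<otimes> inv g) \<inter> unity_roots G r) = card (centralizer y \<inter> unity_roots G r)"
proof -
  have le: "card (centralizer x \<inter> unity_roots G r) \<le> card (centralizer (h \<otimes> x \<otimes> inv h) \<inter> unity_roots G r)"
    if "h \<in> carrier G" "x \<in> carrier G" for h x
  proof (rule card_inj_on_le)
    show "inj_on (\<lambda>z. h \<otimes> z \<otimes> inv h) (centralizer x \<inter> unity_roots G r)"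
      using that by (intro inj_onI) (auto simp: centralizer_def)
  qed (rule conjugation_centralizer_unity_roots[OF that], simp)
  have "card (centralizer (g \<otimes> y \<otimes> inv g) \<inter> unity_roots G r) \<le> card (centralizer y \<inter> unity_roots G r)"
    using le[of "inv g" "g \<otimes> y \<otimes> inv g"] conj_inv_conj[OF assms] assms by simp
  thus ?thesis using le[OF assms] by simp
qed

section \<open>Generators of cyclic subgroups\<close>

lemma card_generate_singleton: "x \<in> carrier G \<Longrightarrow> card (generate G {x}) = ord x"
  by (simp add: generate_pow_card)

lemma generate_singleton_eq_pow_image:
  assumes "x \<in> carrier G"
  shows "generate G {x} = (\<lambda>k. x [^] k) ` {1..ord x}"
proof (intro equalityI subsetI)
  fix y assume "y \<in> generate G {x}"
  then obtain k where k: "k \<in> {0..ord x - 1}" "y = x [^] k"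
    using generate_pow_on_finite_carrier[OF finite_carrier assms] ord_elems[OF finite_carrier assms]
    by auto
  have "ord x \<ge> 1" using ord_ge_1[OF finite_carrier assms] .
  show "y \<in> (\<lambda>k. x [^] k) ` {1..ord x}"
  proof (cases "k = 0")
    case True
    hence "y = x [^] ord x" using k assms by simp
    thus ?thesis using \<open>ord x \<ge> 1\<close> by auto
  qed (use k \<open>ord x \<ge> 1\<close> in auto)
qed (use generate_pow_on_finite_carrier[OF finite_carrier assms] in auto)

lemma generate_singleton_eq_of_ord_eq:
  assumes "x \<in> carrier G" "y \<in> generate G {x}" "ord y = ord x"
  shows "generate G {y} = generate G {x}"
proof -
  have "generate G {x} \<subseteq> carrier G" using assms(1) generate_incl by blast
  hence "y \<in> carrier G" using assms(2) by blast
  have "generate G {y} \<subseteq> generate G {x}"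
    using assms(1,2) generate_subgroup_incl generate_is_subgroup by simp
  moreover have "finite (generate G {x})"
    using finite_subset[OF \<open>generate G {x} \<subseteq> carrier G\<close> finite_carrier] .
  ultimately show ?thesis
    using card_subset_eq assms card_generate_singleton \<open>y \<in> carrier G\<close> by metis
qed

lemma generators_eq_pow_image:
  assumes "x \<in> carrier G"
  shows "{y \<in> carrier G. generate G {y} = generate G {x}} = (\<lambda>k. x [^] k) ` totatives (ord x)"
proof (intro equalityI subsetI)
  fix y assume "y \<in> {y \<in> carrier G. generate G {y} = generate G {x}}"
  hence y: "y \<in> carrier G" "generate G {y} = generate G {x}" by simp_all
  hence "y \<in> generate G {x}" using generate.incl[of y "{y}" G] by auto
  then obtain k where k: "k \<in> {1..ord x}" "y = x [^] k"
    using generate_singleton_eq_pow_image[OF assms] by blast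
  have "ord y = ord x" using y card_generate_singleton assms by metis
  hence "coprime k (ord x)" using pow_ord_eq_ord_iff[OF finite_carrier assms] k(2) by simp
  thus "y \<in> (\<lambda>k. x [^] k) ` totatives (ord x)" using k by (auto simp: in_totatives_iff)
next
  fix y assume "y \<in> (\<lambda>k. x [^] k) ` totatives (ord x)"
  then obtain k where k: "k \<in> totatives (ord x)" "y = x [^] k" by blast
  have "ord y = ord x"
    using pow_ord_eq_ord_iff[OF finite_carrier assms] k by (simp add: in_totatives_iff)
  moreover have "y \<in> generate G {x}"
    using generate_singleton_eq_pow_image[OF assms] k in_totatives_iff by fastforce
  ultimately show "y \<in> {y \<in> carrier G. generate G {y} = generate G {x}}"
    using generate_singleton_eq_of_ord_eq[OF assms] k assms by simp
qed

lemma card_generators: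
  assumes "x \<in> carrier G"
  shows "card {y \<in> carrier G. generate G {y} = generate G {x}} = totient (ord x)"
proof -
  have "totatives (ord x) \<subseteq> {1..ord x}" by (auto simp: in_totatives_iff)
  hence "inj_on (\<lambda>k. x [^] k) (totatives (ord x))" by (rule inj_on_subset[OF ord_inj'[OF assms]])
  thus ?thesis by (simp add: generators_eq_pow_image[OF assms] card_image totient_def)
qed

lemma centralizer_eq_of_generate_eq:
  assumes "x \<in> carrier G" "y \<in> carrier G" "generate G {x} = generate G {y}"
  shows "centralizer x = centralizer y"
proof -
  have "centralizer y \<subseteq> centralizer x"
    if xy: "x \<in> carrier G" "y \<in> carrier G" "generate G {x} = generate G {y}" for x y
  proof
    fix g assume g: "g \<in> centralizer y"
    have "x \<in> generate G {y}" using xy generate.incl[of x "{x}" G] by auto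
    then obtain k :: nat where "x = y [^] k" using generate_singleton_eq_pow_image[OF xy(2)] by auto
    thus "g \<in> centralizer x"
      using g xy group_commutes_pow[of y g k] by (simp add: centralizer_def)
  qed
  thus ?thesis using assms by (metis equalityI)
qed

lemma totient_dvd_sum_ord_eq:
  fixes F :: "'a \<Rightarrow> nat"
  assumes F: "\<And>x y. x \<in> carrier G \<Longrightarrow> y \<in> carrier G \<Longrightarrow> generate G {x} = generate G {y} \<Longrightarrow> F x = F y"
  shows "totient d dvd (\<Sum>y\<in>{y \<in> carrier G. ord y = d}. F y)"
proof -
  let ?D = "{y \<in> carrier G. ord y = d}"
  have "(\<Sum>y\<in>?D. F y) = (\<Sum>H\<in>(\<lambda>y. generate G {y}) ` ?D. \<Sum>y\<in>{x \<in> ?D. generate G {x} = H}. F y)"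
    by (rule sum.image_gen) simp
  also have "totient d dvd \<dots>"
  proof (rule dvd_sum)
    fix H assume "H \<in> (\<lambda>y. generate G {y}) ` ?D"
    then obtain y where y: "y \<in> carrier G" "ord y = d" "H = generate G {y}" by blast
    have "ord x = d" if "x \<in> carrier G" "generate G {x} = generate G {y}" for x
      using card_generate_singleton[OF that(1)] card_generate_singleton[OF y(1)] that(2) y(2) by simp
    hence fiber: "{x \<in> ?D. generate G {x} = H} = {x \<in> carrier G. generate G {x} = generate G {y}}"
      unfolding y(3) by blast
    have "(\<Sum>x\<in>{x \<in> ?D. generate G {x} = H}. F x) = (\<Sum>x\<in>{x \<in> carrier G. generate G {x} = generate G {y}}. F y)"
      unfolding fiber using F y(1) by (intro sum.cong) blast+
    thus "totient d dvd (\<Sum>x\<in>{x \<in> ?D. generate G {x} = H}. F x)"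
      using card_generators[OF y(1)] y(2) by simp
  qed
  finally show ?thesis .
qed

section \<open>Frobenius' theorem\<close>

lemma bij_betw_mult_unity_roots:
  assumes "coprime a b" "a > 0"
  shows "bij_betw (\<lambda>(y, z). y \<otimes> z)
           (SIGMA y:unity_roots G a. centralizer y \<inter> unity_roots G b) (unity_roots G (a * b))"
proof -
  obtain u v where uv: "a * u = b * v + 1"
    using bezout_nat[of a b] assms by (auto simp: coprime_iff_gcd_eq_1)
  define P where "P = (SIGMA y:unity_roots G a. centralizer y \<inter> unity_roots G b)"
  have P_iff: "(y, z) \<in> P \<longleftrightarrow> y \<in> carrier G \<and> y [^] a = \<one> \<and> z \<in> carrier G \<and> z [^] b = \<one> \<and> z \<otimes> y = y \<otimes> z"
    for y z by (auto simp: P_def unity_roots_def centralizer_def)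
  have "inj_on (\<lambda>(y, z). y \<otimes> z) P"
  proof (rule inj_onI, clarify)
    fix y z y' z' assume "(y, z) \<in> P" "(y', z') \<in> P" and eq: "y \<otimes> z = y' \<otimes> z'"
    hence p: "y \<in> carrier G" "y [^] a = \<one>" "z \<in> carrier G" "z [^] b = \<one>" "z \<otimes> y = y \<otimes> z"
      and p': "y' \<in> carrier G" "y' [^] a = \<one>" "z' \<in> carrier G" "z' [^] b = \<one>" "z' \<otimes> y' = y' \<otimes> z'"
      unfolding P_iff by simp_all
    have "z = z'"
      using pow_mult_eq_of_bezout[OF uv p] pow_mult_eq_of_bezout[OF uv p'] eq by simp
    thus "y = y' \<and> z = z'" using eq r_cancel p(1,3) p'(1) by auto
  qed
  moreover have "(\<lambda>(y, z). y \<otimes> z) ` P = unity_roots G (a * b)"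
  proof (intro equalityI subsetI)
    fix x assume "x \<in> (\<lambda>(y, z). y \<otimes> z) ` P"
    then obtain y z where x: "x = y \<otimes> z" and "(y, z) \<in> P" by auto
    hence y: "y \<in> carrier G" "y [^] a = \<one>" and z: "z \<in> carrier G" "z [^] b = \<one>" "z \<otimes> y = y \<otimes> z"
      by (simp_all add: P_iff)
    have "y [^] (a * b) = \<one>" using y by (simp add: nat_pow_pow[symmetric])
    moreover have "z [^] (a * b) = \<one>" using z by (simp add: nat_pow_pow[symmetric] mult.commute[of a b])
    ultimately have "(y \<otimes> z) [^] (a * b) = \<one>" using pow_mult_distrib[of y z "a * b"] y z by simp
    thus "x \<in> unity_roots G (a * b)" using x y z by (simp add: unity_roots_def)
  next
    fix x assume "x \<in> unity_roots G (a * b)"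
    hence "x \<in> carrier G" "x [^] (a * b) = \<one>" by (simp_all add: unity_roots_def)
    note split = split_unity_root_of_bezout[OF uv this]
    have "(inv (x [^] (b * v)), x [^] (a * u)) \<in> P" using split(1,2) by (simp add: P_def)
    thus "x \<in> (\<lambda>(y, z). y \<otimes> z) ` P" by (rule rev_image_eqI) (simp add: split(3))
  qed
  ultimately show ?thesis by (simp add: bij_betw_def P_def)
qed

lemma card_unity_roots_mult_coprime:
  assumes "coprime a b" "a > 0"
  shows "card (unity_roots G (a * b)) = (\<Sum>y\<in>unity_roots G a. card (centralizer y \<inter> unity_roots G b))"
proof -
  have "card (unity_roots G (a * b)) = card (SIGMA y:unity_roots G a. centralizer y \<inter> unity_roots G b)"
    using bij_betw_same_card[OF bij_betw_mult_unity_roots[OF assms]] by simp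
  also have "\<dots> = (\<Sum>y\<in>unity_roots G a. card (centralizer y \<inter> unity_roots G b))"
    by (rule card_SigmaI) simp_all
  finally show ?thesis .
qed

lemma dvd_sum_conj_invariant:
  fixes F :: "'a \<Rightarrow> nat"
  assumes invariant: "\<And>g y. g \<in> carrier G \<Longrightarrow> y \<in> carrier G \<Longrightarrow> F (g \<otimes> y \<otimes> inv g) = F y"
    and dvd: "\<And>y. y \<in> carrier G \<Longrightarrow> r dvd card (orbit G conj_action y) * F y"
  shows "r dvd (\<Sum>y\<in>carrier G. F y)"
proof -
  interpret group_action G "carrier G" conj_action by (rule action_by_conjugation)
  have orbit_sum: "(\<Sum>y\<in>orbit G conj_action x. F y) = card (orbit G conj_action x) * F x"
    if "x \<in> carrier G" for x
  proof -
    have "F y = F x" if y: "y \<in> orbit G conj_action x" for y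
    proof -
      obtain g where "g \<in> carrier G" "y = g \<otimes> x \<otimes> inv g"
        using y \<open>x \<in> carrier G\<close> unfolding orbit_def by auto
      thus ?thesis using invariant \<open>x \<in> carrier G\<close> by simp
    qed
    hence "(\<Sum>y\<in>orbit G conj_action x. F y) = (\<Sum>y\<in>orbit G conj_action x. F x)"
      by (rule sum.cong[OF refl])
    thus ?thesis by simp
  qed
  have "r dvd (\<Sum>y\<in>orb. F y)" if orb: "orb \<in> orbits G (carrier G) conj_action" for orb
  proof -
    obtain x where "x \<in> carrier G" "orb = orbit G conj_action x"
      using orb unfolding orbits_def by blast
    thus ?thesis using orbit_sum dvd by simp
  qed
  hence "r dvd (\<Sum>orb\<in>orbits G (carrier G) conj_action. \<Sum>y\<in>orb. F y)" by (rule dvd_sum)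
  thus ?thesis using disjoint_sum[OF finite_carrier, of F] by simp
qed

lemma dvd_card_orbit_mult_card_centralizer_unity_roots:
  assumes "y \<in> carrier G" "y \<notin> center" "r dvd order G"
    and frobenius_subgroups: "\<And>H m. subgroup H G \<Longrightarrow> H \<noteq> carrier G \<Longrightarrow> m dvd card H
                                     \<Longrightarrow> m dvd card (unity_roots (G\<lparr>carrier := H\<rparr>) m)"
  shows "r dvd card (orbit G conj_action y) * card (centralizer y \<inter> unity_roots G r)"
proof -
  let ?C = "centralizer y"
  have C: "subgroup ?C G" by (rule subgroup_centralizer[OF assms(1)])
  have "?C \<noteq> carrier G" using centralizer_eq_carrier_iff[OF assms(1)] assms(2) by simp
  have "finite ?C" by (rule finite_subset[OF subgroup.subset[OF C] finite_carrier])
  \<comment> \<open>Frobenius in the proper subgroup C for d = gcd r |C|, and r divides |orbit| |C| = |G|\<close>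
  define d where "d = gcd r (card ?C)"
  have pow_iff: "x [^] d = \<one> \<longleftrightarrow> x [^] r = \<one>" if "x \<in> ?C" for x
  proof -
    have "x \<in> carrier G" by (rule subgroup.mem_carrier[OF C that])
    thus ?thesis
      using pow_card_subgroup_eq_one[OF C \<open>finite ?C\<close> that] pow_eq_id by (simp add: d_def)
  qed
  have "unity_roots (G\<lparr>carrier := ?C\<rparr>) d = ?C \<inter> unity_roots G r"
    unfolding unity_roots_subgroup using subgroup.mem_carrier[OF C] by (auto simp: unity_roots_def pow_iff)
  hence "gcd r (card ?C) dvd card (?C \<inter> unity_roots G r)"
    using frobenius_subgroups[OF C \<open>?C \<noteq> carrier G\<close>, of d] by (simp add: d_def)
  hence "gcd (card (orbit G conj_action y) * r) (card (orbit G conj_action y) * card ?C)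
           dvd card (orbit G conj_action y) * card (?C \<inter> unity_roots G r)"
    by (simp add: gcd_mult_distrib_nat[symmetric])
  moreover have "r dvd gcd (card (orbit G conj_action y) * r) (card (orbit G conj_action y) * card ?C)"
    using assms(3) card_orbit_mult_card_centralizer[OF assms(1)] by simp
  ultimately show ?thesis using dvd_trans by blast
qed

lemma coprime_card_center_unity_roots:
  assumes "coprime a r"
  shows "coprime (card (center \<inter> unity_roots G a)) r"
proof (rule coprime_if_no_common_prime_factor)
  fix q assume q: "Factorial_Ring.prime q" "q dvd card (center \<inter> unity_roots G a)" "q dvd r"
  let ?Z = "center \<inter> unity_roots G a"
  interpret Z: finite_group "G\<lparr>carrier := ?Z\<rparr>"
    by (rule finite_group_subgroup[OF subgroup_center_unity_roots])
  obtain x where x: "x \<in> ?Z" "x \<noteq> \<one>" "x [^] q = \<one>"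
    using Z.exists_pow_prime_eq_one[OF q(1)] q(2) by (auto simp: order_def nat_pow_def)
  hence "x \<in> carrier G" "ord x dvd a" by (auto simp: mem_unity_roots_iff)
  moreover from this have "ord x = q"
    using x q(1) pow_eq_id ord_eq_1 by (auto simp: prime_nat_iff)
  ultimately have "q dvd a" by simp
  hence "is_unit q" using coprime_common_divisor[OF assms] q(3) by blast
  thus False using q(1) not_prime_unit by blast
qed

lemma card_unity_roots_mult_cong:
  assumes "coprime a r" "a > 0" "r dvd order G"
    and frobenius_subgroups: "\<And>H m. subgroup H G \<Longrightarrow> H \<noteq> carrier G \<Longrightarrow> m dvd card H
                                     \<Longrightarrow> m dvd card (unity_roots (G\<lparr>carrier := H\<rparr>) m)"
  shows "[card (unity_roots G (a * r)) = card (center \<inter> unity_roots G a) * card (unity_roots G r)] (mod r)"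
proof -
  define F where "F y = card (centralizer y \<inter> unity_roots G r)" for y
  define T where "T = unity_roots G a - center"
  have "card (unity_roots G (a * r)) = (\<Sum>y\<in>center \<inter> unity_roots G a. F y) + (\<Sum>y\<in>T. F y)"
    using card_unity_roots_mult_coprime[OF assms(1,2)] sum.Int_Diff[of "unity_roots G a" F center]
    by (simp add: F_def T_def Int_commute)
  also have "(\<Sum>y\<in>center \<inter> unity_roots G a. F y) = card (center \<inter> unity_roots G a) * card (unity_roots G r)"
  proof -
    have "F y = card (unity_roots G r)" if "y \<in> center \<inter> unity_roots G a" for y
      using that centralizer_eq_carrier_iff[of y] by (auto simp: F_def center_def unity_roots_def Int_absorb1)
    thus ?thesis by simp
  qed
  also have "(\<Sum>y\<in>T. F y) = (\<Sum>y\<in>carrier G. if y \<in> T then F y else 0)"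
  proof -
    have "{y \<in> carrier G. y \<in> T} = T" by (auto simp: T_def unity_roots_def)
    thus ?thesis using sum.inter_filter[OF finite_carrier, of F "\<lambda>y. y \<in> T"] by simp
  qed
  finally have decomposition: "card (unity_roots G (a * r))
      = card (center \<inter> unity_roots G a) * card (unity_roots G r) + (\<Sum>y\<in>carrier G. if y \<in> T then F y else 0)" .
  have "r dvd (\<Sum>y\<in>carrier G. if y \<in> T then F y else 0)"
  proof (rule dvd_sum_conj_invariant)
    fix g y assume "g \<in> carrier G" "y \<in> carrier G"
    thus "(if g \<otimes> y \<otimes> inv g \<in> T then F (g \<otimes> y \<otimes> inv g) else 0) = (if y \<in> T then F y else 0)"
      by (simp add: T_def F_def conj_mem_center_iff conj_mem_unity_roots_iff card_centralizer_unity_roots_conj)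
  next
    fix y assume "y \<in> carrier G"
    thus "r dvd card (orbit G conj_action y) * (if y \<in> T then F y else 0)"
      using dvd_card_orbit_mult_card_centralizer_unity_roots[OF _ _ assms(3) frobenius_subgroups]
      by (simp add: T_def F_def)
  qed
  thus ?thesis unfolding decomposition by (simp add: cong_add_lcancel_0_nat cong_0_iff)
qed

lemma card_unity_roots_prime_power_cong:
  assumes "Factorial_Ring.prime p" "coprime p r"
  shows "[card (unity_roots G (p ^ Suc e * r)) = card (unity_roots G (p ^ e * r))] (mod p ^ e)"
proof -
  define F where "F y = card (centralizer y \<inter> unity_roots G r)" for y
  define D where "D = {y \<in> carrier G. ord y = p ^ Suc e}"
  have card_eq_sum: "card (unity_roots G (p ^ k * r)) = (\<Sum>y\<in>unity_roots G (p ^ k). F y)" for k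
    using card_unity_roots_mult_coprime[of "p ^ k" r] assms prime_gt_0_nat[OF assms(1)]
    by (simp add: F_def)
  have "p ^ e < p ^ Suc e" using prime_gt_1_nat[OF assms(1)] by simp
  hence "\<not> p ^ Suc e dvd p ^ e" by (auto dest: dvd_imp_le)
  hence disjoint: "unity_roots G (p ^ e) \<inter> D = {}" by (auto simp: mem_unity_roots_iff D_def)
  have split: "unity_roots G (p ^ Suc e) = unity_roots G (p ^ e) \<union> D"
  proof (intro equalityI subsetI)
    fix y assume "y \<in> unity_roots G (p ^ Suc e)"
    thus "y \<in> unity_roots G (p ^ e) \<union> D"
      using dvd_prime_power_Suc_iff[OF assms(1), of "ord y" e] by (simp add: mem_unity_roots_iff D_def)
  next
    fix y assume "y \<in> unity_roots G (p ^ e) \<union> D"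
    thus "y \<in> unity_roots G (p ^ Suc e)"
      using dvd_prime_power_Suc_iff[OF assms(1), of "ord y" e] by (auto simp: mem_unity_roots_iff D_def)
  qed
  have "card (unity_roots G (p ^ Suc e * r)) = card (unity_roots G (p ^ e * r)) + (\<Sum>y\<in>D. F y)"
    unfolding card_eq_sum split by (rule sum.union_disjoint[OF _ _ disjoint]) (simp_all add: D_def)
  moreover have "F x = F y" if "x \<in> carrier G" "y \<in> carrier G" "generate G {x} = generate G {y}" for x y
    using centralizer_eq_of_generate_eq[OF that] by (simp add: F_def)
  hence "totient (p ^ Suc e) dvd (\<Sum>y\<in>D. F y)" unfolding D_def by (rule totient_dvd_sum_ord_eq)
  hence "p ^ e dvd (\<Sum>y\<in>D. F y)"
    using totient_prime_power_Suc[OF assms(1)] by (simp add: dvd_mult_left)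
  ultimately show ?thesis by (simp add: cong_add_lcancel_0_nat cong_0_iff)
qed

lemma frobenius_step:
  assumes frobenius_subgroups: "\<And>H m. subgroup H G \<Longrightarrow> H \<noteq> carrier G \<Longrightarrow> m dvd card H
                                     \<Longrightarrow> m dvd card (unity_roots (G\<lparr>carrier := H\<rparr>) m)"
    and frobenius_larger: "\<And>m. m dvd order G \<Longrightarrow> n < m \<Longrightarrow> m dvd card (unity_roots G m)"
    and "n dvd order G"
  shows "n dvd card (unity_roots G n)"
proof (cases "n = order G")
  case True
  hence "unity_roots G n = carrier G" using pow_order_eq_1 by (auto simp: unity_roots_def)
  thus ?thesis using True by (simp add: order_def)
next
  case False
  then obtain p e r where p: "Factorial_Ring.prime p" and n: "n = p ^ e * r" "p * n dvd order G"
    and "coprime p r"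
    using exists_prime_split_dvd[OF assms(3)] order_gt_0_iff_finite by auto
  have "r dvd order G" using dvd_trans[OF _ assms(3)] n(1) by simp
  let ?f = "\<lambda>m. card (unity_roots G m)"
  let ?Z = "\<lambda>j. card (center \<inter> unity_roots G (p ^ j))"
  have "n > 0" using assms(3) order_gt_0_iff_finite by (intro gr0I) auto
  hence "n < p * n" using prime_gt_1_nat[OF p] by simp
  hence "p * n dvd ?f (p * n)" using n(2) frobenius_larger by blast
  moreover have "p ^ Suc e * r = p * n" using n(1) by simp
  ultimately have larger: "p ^ Suc e * r dvd ?f (p ^ Suc e * r)" by (simp only:)
  have central_part: "[?f (p ^ j * r) = ?Z j * ?f r] (mod r)" for j
    using \<open>coprime p r\<close> prime_gt_0_nat[OF p] \<open>r dvd order G\<close>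
    by (intro card_unity_roots_mult_cong frobenius_subgroups) simp_all
  have "r dvd ?f (p ^ Suc e * r)" by (rule dvd_trans[OF dvd_triv_right larger])
  hence "r dvd ?Z (Suc e) * ?f r" using cong_dvd_iff[OF central_part] by blast
  moreover have "coprime (?Z (Suc e)) r"
    using \<open>coprime p r\<close> by (intro coprime_card_center_unity_roots) simp
  ultimately have "r dvd ?f r" by (simp add: coprime_dvd_mult_right_iff coprime_commute)
  hence "r dvd ?f n" using cong_dvd_iff[OF central_part[of e]] n(1) by simp
  moreover have "p ^ e dvd p ^ Suc e * r" by (simp add: dvd_mult2 le_imp_power_dvd)
  hence "p ^ e dvd ?f (p ^ Suc e * r)" using larger by (rule dvd_trans)
  hence "p ^ e dvd ?f n"
    using cong_dvd_iff[OF card_unity_roots_prime_power_cong[OF p \<open>coprime p r\<close>]] n(1) by simp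
  ultimately show ?thesis using n(1) \<open>coprime p r\<close> by (simp add: divides_mult)
qed

lemma frobenius_of_subgroups:
  assumes frobenius_subgroups: "\<And>H m. subgroup H G \<Longrightarrow> H \<noteq> carrier G \<Longrightarrow> m dvd card H
                                     \<Longrightarrow> m dvd card (unity_roots (G\<lparr>carrier := H\<rparr>) m)"
    and "n dvd order G"
  shows "n dvd card (unity_roots G n)"
proof -
  have "\<forall>n. order G - n = k \<longrightarrow> n dvd order G \<longrightarrow> n dvd card (unity_roots G n)" for k
  proof (induction k rule: less_induct)
    case (less k)
    show ?case
    proof (intro allI impI)
      fix n assume k: "order G - n = k" and "n dvd order G"
      show "n dvd card (unity_roots G n)"
      proof (rule frobenius_step[OF frobenius_subgroups _ \<open>n dvd order G\<close>])
        fix m assume m: "m dvd order G" "n < m"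
        have "m \<le> order G" by (rule dvd_imp_le[OF m(1)]) (simp add: order_gt_0_iff_finite)
        hence "order G - m < k" using k m(2) by linarith
        thus "m dvd card (unity_roots G m)" using less.IH m(1) by blast
      qed
    qed
  qed
  thus ?thesis using assms(2) by blast
qed

end

theorem frobenius:
  assumes "finite_group G" "n dvd order G"
  shows "n dvd card (unity_roots G n)"
proof -
  have "\<forall>G :: ('a, 'b) monoid_scheme. \<forall>n. finite_group G \<longrightarrow> order G = N \<longrightarrow> n dvd order G
          \<longrightarrow> n dvd card (unity_roots G n)" for N
  proof (induction N rule: less_induct)
    case (less N)
    show ?case
    proof (intro allI impI)
      fix G :: "('a, 'b) monoid_scheme" and n
      assume "finite_group G" "order G = N" "n dvd order G"
      interpret finite_group G by fact
      show "n dvd card (unity_roots G n)"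
      proof (rule frobenius_of_subgroups[OF _ \<open>n dvd order G\<close>])
        fix H m assume H: "subgroup H G" "H \<noteq> carrier G" and "m dvd card H"
        have "H \<subset> carrier G" using H subgroup.subset by blast
        hence "order (G\<lparr>carrier := H\<rparr>) < N"
          using psubset_card_mono[OF finite_carrier] \<open>order G = N\<close> by (simp add: order_def)
        thus "m dvd card (unity_roots (G\<lparr>carrier := H\<rparr>) m)"
          using less.IH finite_group_subgroup[OF H(1)] \<open>m dvd card H\<close> by (simp add: order_def)
      qed
    qed
  qed
  thus ?thesis using assms by blast
qed

section \<open>Counting cyclic subgroups\<close>

context finite_group
begin

lemma finite_cyclic_subgroups: "finite {H. cyclic_subgroup G H \<and> P H}"
proof (rule finite_subset[of _ "Pow (carrier G)"])
  show "{H. cyclic_subgroup G H \<and> P H} \<subseteq> Pow (carrier G)"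
    unfolding cyclic_subgroup_def using generate_incl by blast
qed simp

lemma cyclic_subgroups_dvd_eq_image:
  "{H. cyclic_subgroup G H \<and> card H dvd m} = (\<lambda>x. generate G {x}) ` unity_roots G m"
  unfolding cyclic_subgroup_def using card_generate_singleton by (auto simp: mem_unity_roots_iff)

lemma card_unity_roots_eq_sum_totient:
  "card (unity_roots G m) = (\<Sum>H\<in>{H. cyclic_subgroup G H \<and> card H dvd m}. totient (card H))"
proof -
  have "card (unity_roots G m) = (\<Sum>x\<in>unity_roots G m. 1)" by simp
  also have "\<dots> = (\<Sum>H\<in>(\<lambda>x. generate G {x}) ` unity_roots G m. \<Sum>x\<in>{x \<in> unity_roots G m. generate G {x} = H}. 1)"
    by (rule sum.image_gen) simp
  also have "\<dots> = (\<Sum>H\<in>(\<lambda>x. generate G {x}) ` unity_roots G m. totient (card H))"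
  proof (rule sum.cong[OF refl])
    fix H assume "H \<in> (\<lambda>x. generate G {x}) ` unity_roots G m"
    then obtain y where y: "y \<in> unity_roots G m" "H = generate G {y}" by blast
    hence "y \<in> carrier G" by (simp add: mem_unity_roots_iff)
    have "x \<in> unity_roots G m" if "x \<in> carrier G" "generate G {x} = generate G {y}" for x
    proof -
      have "ord x = ord y"
        using card_generate_singleton[OF that(1)] card_generate_singleton[OF \<open>y \<in> carrier G\<close>] that(2)
        by simp
      thus ?thesis using y(1) that(1) by (simp add: mem_unity_roots_iff)
    qed
    hence "{x \<in> unity_roots G m. generate G {x} = H} = {x \<in> carrier G. generate G {x} = generate G {y}}"
      unfolding y(2) by (auto simp: unity_roots_def)
    thus "(\<Sum>x\<in>{x \<in> unity_roots G m. generate G {x} = H}. 1) = totient (card H)"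
      using card_generators[OF \<open>y \<in> carrier G\<close>] card_generate_singleton[OF \<open>y \<in> carrier G\<close>] y(2) by simp
  qed
  finally show ?thesis by (simp add: cyclic_subgroups_dvd_eq_image)
qed

lemma sum_totatives_card_unity_roots_gcd:
  assumes "n > 0"
  shows "(\<Sum>u\<in>totatives n. card (unity_roots G (gcd (u - 1) n)))
           = card {H. cyclic_subgroup G H \<and> card H dvd n} * totient n"
proof -
  let ?C = "{H. cyclic_subgroup G H \<and> card H dvd n}"
  have "{H. cyclic_subgroup G H \<and> card H dvd gcd (u - 1) n} = {H \<in> ?C. card H dvd u - 1}" for u
    by auto
  hence "card (unity_roots G (gcd (u - 1) n)) = (\<Sum>H\<in>{H \<in> ?C. card H dvd u - 1}. totient (card H))" for u
    by (simp add: card_unity_roots_eq_sum_totient)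
  thus ?thesis
    using sum_totatives_sum_totient_dvd_pred[OF assms finite_cyclic_subgroups[of "\<lambda>H. card H dvd n"], of card]
    by simp
qed

lemma card_unity_roots_ge:
  assumes "m dvd order G" "m > 0"
  shows "m \<le> card (unity_roots G m)"
proof -
  have "\<one> \<in> unity_roots G m" by (simp add: unity_roots_def)
  hence "card (unity_roots G m) > 0" by (auto simp: card_gt_0_iff)
  thus ?thesis using frobenius[OF finite_group_axioms assms(1)] by (simp add: dvd_imp_le)
qed

lemma gcd_le_card_unity_roots_gcd:
  assumes "n > 0" "n dvd order G"
  shows "gcd k n \<le> card (unity_roots G (gcd k n))"
  using card_unity_roots_ge[OF dvd_trans[OF gcd_dvd2 assms(2)]] assms(1) by simp

lemma sum_totatives_gcd_pred_le:
  assumes "n > 0" "n dvd order G"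
  shows "(\<Sum>u\<in>totatives n. gcd (u - 1) n) \<le> (\<Sum>u\<in>totatives n. card (unity_roots G (gcd (u - 1) n)))"
  by (rule sum_mono) (rule gcd_le_card_unity_roots_gcd[OF assms])

lemma num_divisors_le_card_cyclic_subgroups:
  assumes "n > 0" "n dvd order G"
  shows "num_divisors n \<le> card {H. cyclic_subgroup G H \<and> card H dvd n}"
  using sum_totatives_gcd_pred_le[OF assms] sum_totatives_gcd_pred[OF assms(1)]
    sum_totatives_card_unity_roots_gcd[OF assms(1)] assms(1)
  by simp

lemma card_unity_roots_odd:
  assumes "odd m" "2 * m dvd order G" "card (unity_roots G (2 * m)) = 2 * m"
  shows "card (unity_roots G m) = m"
proof -
  have "m > 0" using assms(1) by (intro gr0I) auto
  obtain t where t: "t \<in> carrier G" "t \<noteq> \<one>" "t [^] (2::nat) = \<one>"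
    using exists_pow_prime_eq_one[OF two_is_prime_nat] dvd_trans[OF _ assms(2)] by force
  have "ord t dvd 2" "ord t \<noteq> 1" using t pow_eq_id ord_eq_1 by simp_all
  hence "ord t = 2" using two_is_prime_nat by (auto simp: prime_nat_iff)
  hence "t \<in> unity_roots G (2 * m)" "t \<notin> unity_roots G m"
    using t(1) assms(1) by (auto simp: mem_unity_roots_iff)
  hence "unity_roots G m \<subset> unity_roots G (2 * m)" using unity_roots_mono[of m "2 * m"] by auto
  hence "card (unity_roots G m) < 2 * m" using assms(3) psubset_card_mono[OF finite_unity_roots] by metis
  moreover obtain a where a: "card (unity_roots G m) = m * a"
    using frobenius[OF finite_group_axioms dvd_trans[OF _ assms(2)]] by (metis dvd_triv_right dvdE)
  moreover have "m \<le> card (unity_roots G m)"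
    using card_unity_roots_ge[OF dvd_trans[OF _ assms(2)] \<open>m > 0\<close>] by simp
  ultimately have "a = 1" using \<open>m > 0\<close> by (cases a) auto
  thus ?thesis using a by simp
qed

lemma card_cyclic_subgroups_eq_num_divisors_iff:
  assumes "n > 0" "n dvd order G"
  shows "card {H. cyclic_subgroup G H \<and> card H dvd n} = num_divisors n
           \<longleftrightarrow> (\<forall>m. 0 < m \<and> m dvd n \<longrightarrow> card (unity_roots G m) = m)"
    (is "?eq \<longleftrightarrow> ?exact")
proof
  assume ?exact
  hence "card (unity_roots G (gcd (u - 1) n)) = gcd (u - 1) n" for u using assms(1) by simp
  thus ?eq using sum_totatives_gcd_pred[OF assms(1)] sum_totatives_card_unity_roots_gcd[OF assms(1)] assms(1)
    by simp
next
  assume ?eq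
  hence sum_eq: "(\<Sum>u\<in>totatives n. gcd (u - 1) n) = (\<Sum>u\<in>totatives n. card (unity_roots G (gcd (u - 1) n)))"
    using sum_totatives_gcd_pred[OF assms(1)] sum_totatives_card_unity_roots_gcd[OF assms(1)] by simp
  have le: "gcd (u - 1) n \<le> card (unity_roots G (gcd (u - 1) n))" for u
    by (rule gcd_le_card_unity_roots_gcd[OF assms])
  have "card (unity_roots G (gcd (u - 1) n)) = gcd (u - 1) n" if "u \<in> totatives n" for u
    using sum_mono_inv[OF sum_eq le that finite_totatives] by simp
  hence exact_if_parity: "card (unity_roots G m) = m" if "m dvd n" "odd n \<or> even m" for m
    using exists_totative_gcd_pred_eq[OF assms(1) that] by blast
  show ?exact
  proof (intro allI impI)
    fix m assume m: "0 < m \<and> m dvd n"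
    show "card (unity_roots G m) = m"
    proof (cases "odd n \<or> even m")
      case False
      hence "2 * m dvd n" using m by (simp add: divides_mult)
      thus ?thesis
        using card_unity_roots_odd False dvd_trans[OF _ assms(2)] exact_if_parity[of "2 * m"] by simp
    qed (use m exact_if_parity in blast)
  qed
qed

lemma card_unity_roots_eq_sum_ord:
  assumes "m > 0"
  shows "card (unity_roots G m) = (\<Sum>j | j dvd m. card {x \<in> carrier G. ord x = j})"
proof -
  have "card (unity_roots G m) = (\<Sum>j | j dvd m. \<Sum>x\<in>{x \<in> unity_roots G m. ord x = j}. 1)"
    using sum.group[of "unity_roots G m" "{j. j dvd m}" ord "\<lambda>_. 1::nat"] assms
    by (simp add: mem_unity_roots_iff image_subset_iff)
  also have "\<dots> = (\<Sum>j | j dvd m. card {x \<in> carrier G. ord x = j})"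
  proof (rule sum.cong[OF refl])
    fix j assume "j \<in> {j. j dvd m}"
    hence "{x \<in> unity_roots G m. ord x = j} = {x \<in> carrier G. ord x = j}"
      by (auto simp: mem_unity_roots_iff)
    thus "(\<Sum>x\<in>{x \<in> unity_roots G m. ord x = j}. 1) = card {x \<in> carrier G. ord x = j}" by simp
  qed
  finally show ?thesis .
qed

lemma card_ord_eq_totient:
  assumes exact: "\<forall>m. 0 < m \<and> m dvd n \<longrightarrow> card (unity_roots G m) = m" and "n > 0" "k dvd n"
  shows "card {x \<in> carrier G. ord x = k} = totient k"
  using \<open>k dvd n\<close>
proof (induction k rule: less_induct)
  case (less k)
  have "k > 0" using less.prems \<open>n > 0\<close> by (intro gr0I) auto
  let ?D = "{j. j dvd k} - {k}"
  have "{j. j dvd k} = insert k ?D" "finite ?D" using \<open>k > 0\<close> by auto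
  hence split: "(\<Sum>j | j dvd k. f j) = f k + (\<Sum>j\<in>?D. f j)" for f :: "nat \<Rightarrow> nat"
    by (simp add: sum.insert[symmetric])
  have "card {x \<in> carrier G. ord x = j} = totient j" if "j \<in> ?D" for j
  proof (rule less.IH)
    show "j < k" using that dvd_imp_le[of j k] \<open>k > 0\<close> by auto
    show "j dvd n" using that dvd_trans[OF _ less.prems] by simp
  qed
  hence "(\<Sum>j\<in>?D. card {x \<in> carrier G. ord x = j}) = (\<Sum>j\<in>?D. totient j)" by simp
  moreover have "k = card {x \<in> carrier G. ord x = k} + (\<Sum>j\<in>?D. card {x \<in> carrier G. ord x = j})"
    using card_unity_roots_eq_sum_ord[OF \<open>k > 0\<close>] exact less.prems \<open>k > 0\<close> split by simp
  moreover have "k = totient k + (\<Sum>j\<in>?D. totient j)"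
    using totient_divisor_sum[of k] split by simp
  ultimately show ?case by simp
qed

lemma cyclic_of_card_unity_roots_eq:
  assumes exact: "\<forall>m. 0 < m \<and> m dvd n \<longrightarrow> card (unity_roots G m) = m" and "n > 0"
  shows "generate G (\<Union>{H. cyclic_subgroup G H \<and> card H dvd n}) = unity_roots G n"
    and "cyclic_subgroup G (unity_roots G n)"
proof -
  have "card {x \<in> carrier G. ord x = n} > 0"
    using card_ord_eq_totient[OF exact \<open>n > 0\<close> dvd_refl] \<open>n > 0\<close> by simp
  then obtain g where g: "g \<in> carrier G" "ord g = n" by (auto simp: card_gt_0_iff)
  have "(g [^] k) [^] n = (g [^] n) [^] k" for k :: nat using g(1) by (simp add: nat_pow_pow mult.commute)
  hence "generate G {g} \<subseteq> unity_roots G n"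
    using generate_singleton_eq_pow_image[OF g(1)] g by (auto simp: unity_roots_def)
  moreover have "card (generate G {g}) = card (unity_roots G n)"
    using exact \<open>n > 0\<close> card_generate_singleton[OF g(1)] g(2) by simp
  ultimately have K: "generate G {g} = unity_roots G n" by (simp add: card_subset_eq)
  show "cyclic_subgroup G (unity_roots G n)" using K g(1) by (auto simp: cyclic_subgroup_def)
  have "\<Union>{H. cyclic_subgroup G H \<and> card H dvd n} = generate G {g}"
  proof (intro equalityI subsetI)
    fix x assume "x \<in> \<Union>{H. cyclic_subgroup G H \<and> card H dvd n}"
    then obtain h where h: "h \<in> carrier G" "ord h dvd n" "x \<in> generate G {h}"
      by (auto simp: cyclic_subgroup_def card_generate_singleton)
    hence "h \<in> generate G {g}" using K by (simp add: mem_unity_roots_iff)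
    thus "x \<in> generate G {g}"
      using h(3) generate_subgroup_incl[OF _ generate_is_subgroup] g(1) by blast
  next
    fix x assume "x \<in> generate G {g}"
    moreover have "cyclic_subgroup G (generate G {g}) \<and> card (generate G {g}) dvd n"
      using g card_generate_singleton by (auto simp: cyclic_subgroup_def)
    ultimately show "x \<in> \<Union>{H. cyclic_subgroup G H \<and> card H dvd n}" by blast
  qed
  moreover have "generate G (generate G {g}) = generate G {g}"
  proof
    show "generate G (generate G {g}) \<subseteq> generate G {g}"
      using generate_subgroup_incl[OF subset_refl generate_is_subgroup] g(1) by simp
  qed (auto intro: generate.incl)
  ultimately show "generate G (\<Union>{H. cyclic_subgroup G H \<and> card H dvd n}) = unity_roots G n"
    using K by simp
qed

lemma card_generate_Int_unity_roots:
  assumes "g \<in> carrier G" "m dvd ord g"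
  shows "card (generate G {g} \<inter> unity_roots G m) = m"
proof -
  obtain q where q: "ord g = m * q" using assms(2) by blast
  have "ord g > 0" using ord_ge_1[OF finite_carrier assms(1)] by simp
  hence "q > 0" "m > 0" using q by simp_all
  have "generate G {g} \<inter> unity_roots G m = (\<lambda>i. g [^] (q * i)) ` {1..m}"
  proof (intro equalityI subsetI)
    fix x assume "x \<in> generate G {g} \<inter> unity_roots G m"
    then obtain k where k: "k \<in> {1..ord g}" "x = g [^] k" "(g [^] k) [^] m = \<one>"
      using generate_singleton_eq_pow_image[OF assms(1)] by (auto simp: unity_roots_def)
    hence "m * q dvd k * m" using pow_eq_id[OF assms(1)] assms(1) q by (simp add: nat_pow_pow)
    hence "q dvd k" using \<open>m > 0\<close> by (simp add: mult.commute)
    then obtain i where "k = q * i" by blast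
    moreover from this have "i \<in> {1..m}" using k(1) q \<open>q > 0\<close> by (auto simp: mult.commute)
    ultimately show "x \<in> (\<lambda>i. g [^] (q * i)) ` {1..m}" using k(2) by blast
  next
    fix x assume "x \<in> (\<lambda>i. g [^] (q * i)) ` {1..m}"
    then obtain i where x: "x = g [^] (q * i)" by blast
    have "x [^] m = (g [^] ord g) [^] i" using assms(1) q by (simp add: x nat_pow_pow ac_simps)
    hence "x [^] m = \<one>" using assms(1) by simp
    moreover have "x \<in> generate G {g}"
      using generate_pow_on_finite_carrier[OF finite_carrier assms(1)] x by blast
    ultimately show "x \<in> generate G {g} \<inter> unity_roots G m"
      using assms(1) x by (simp add: unity_roots_def)
  qed
  moreover have "inj_on (\<lambda>i. g [^] (q * i)) {1..m}"
  proof (rule comp_inj_on[of "\<lambda>i. q * i", unfolded comp_def])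
    show "inj_on (\<lambda>i. q * i) {1..m}" using \<open>q > 0\<close> by (simp add: inj_on_def)
    have "(\<lambda>i. q * i) ` {1..m} \<subseteq> {1..ord g}" using q \<open>q > 0\<close> by (auto simp: mult.commute)
    thus "inj_on (\<lambda>k. g [^] k) ((\<lambda>i. q * i) ` {1..m})" by (rule inj_on_subset[OF ord_inj'[OF assms(1)]])
  qed
  ultimately show ?thesis by (simp add: card_image)
qed

lemma card_unity_roots_of_cyclic:
  assumes cyclic: "cyclic_subgroup G (generate G (\<Union>{H. cyclic_subgroup G H \<and> card H dvd n}))"
    and card: "card (generate G (\<Union>{H. cyclic_subgroup G H \<and> card H dvd n})) = n"
    and "m dvd n"
  shows "card (unity_roots G m) = m"
proof -
  let ?K = "generate G (\<Union>{H. cyclic_subgroup G H \<and> card H dvd n})"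
  obtain g where g: "g \<in> carrier G" "?K = generate G {g}"
    using cyclic by (auto simp: cyclic_subgroup_def)
  have "unity_roots G m \<subseteq> ?K"
  proof
    fix x assume x: "x \<in> unity_roots G m"
    hence "generate G {x} \<in> {H. cyclic_subgroup G H \<and> card H dvd n}"
      using \<open>m dvd n\<close> card_generate_singleton
      by (auto simp: cyclic_subgroup_def mem_unity_roots_iff intro: dvd_trans)
    moreover have "x \<in> generate G {x}" using x by (auto intro: generate.incl)
    ultimately show "x \<in> ?K" by (blast intro: generate.incl)
  qed
  hence "generate G {g} \<inter> unity_roots G m = unity_roots G m" using g(2) by blast
  moreover have "m dvd ord g" using card g card_generate_singleton \<open>m dvd n\<close> by metis
  ultimately show ?thesis using card_generate_Int_unity_roots[OF g(1)] by metis
qed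

lemma cyclic_generate_cyclic_subgroups_iff:
  assumes "n > 0"
  shows "cyclic_subgroup G (generate G (\<Union>{H. cyclic_subgroup G H \<and> card H dvd n}))
           \<and> card (generate G (\<Union>{H. cyclic_subgroup G H \<and> card H dvd n})) = n
         \<longleftrightarrow> (\<forall>m. 0 < m \<and> m dvd n \<longrightarrow> card (unity_roots G m) = m)"
  using cyclic_of_card_unity_roots_eq[OF _ assms] card_unity_roots_of_cyclic assms by auto

end

theorem corollary3p1:
  fixes G :: "('a, 'b) monoid_scheme" and n :: nat
  assumes "group G" and "finite (carrier G)"
    and "0 < n" and "n dvd order G"
  shows "num_divisors n \<le> card {H. cyclic_subgroup G H \<and> card H dvd n}
    \<and> ((\<forall>m. 0 < m \<and> m dvd n \<longrightarrow> card {x \<in> carrier G. x [^]\<^bsub>G\<^esub> m = \<one>\<^bsub>G\<^esub>} = m)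
           \<longleftrightarrow> card {H. cyclic_subgroup G H \<and> card H dvd n} = num_divisors n)
    \<and> (card {H. cyclic_subgroup G H \<and> card H dvd n} = num_divisors n
           \<longleftrightarrow> (let K = generate G (\<Union> {H. cyclic_subgroup G H \<and> card H dvd n})
                in cyclic_subgroup G K \<and> card K = n))"
proof -
  interpret finite_group G
    using assms(1,2) by (simp add: finite_group_def finite_group_axioms_def)
  have "{x \<in> carrier G. x [^]\<^bsub>G\<^esub> m = \<one>\<^bsub>G\<^esub>} = unity_roots G m" for m
    by (simp add: unity_roots_def)
  thus ?thesis
    using num_divisors_le_card_cyclic_subgroups[OF assms(3,4)]
      card_cyclic_subgroups_eq_num_divisors_iff[OF assms(3,4)]
      cyclic_generate_cyclic_subgroups_iff[OF assms(3)]
    by (simp add: Let_def)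
qed

end
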